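(* For all fixed $\alpha,\delta\in(0,1)$ there is a constant $C>0$ such that for every sufficiently large $n$ there is a Boolean function $f:\{0,1\}^n\to\{0,1\}$ with $\mu(f)=\lceil \alpha 2^n\rceil 2^{-n}$ (so $\mu(f)=\alpha$ up to the unavoidable rounding to a multiple of $2^{-n}$) such that $$J^+_S(f)<1-n^{-C}\quad\text{for every } S\subseteq[n] \text{ with } |S|=\lfloor(1/2-\delta)n\rfloor .$$
   Context: $[n]=\{1,\dots,n\}$. For a finite set $T$, $\Omega(T)=\{0,1\}^T$ and $\mu_T$ is the uniform probability measure on $\Omega(T)$; $\mu=\mu_{[n]}$, and for Boolean $f$, $\mu(f)=\mu(\{x:f(x)=1\})$. Points of $\Omega([n])$ are written $(u,v)$ with $u\in\Omega([n]\setminus S)$, $v\in\Omega(S)$. For $S\subseteq[n]$, $J^+_S(f)=\mu_{[n]\setminus S}(\{u\in\Omega([n]\setminus S):\exists v\in\Omega(S),\ f(u,v)=1\})$, i.e. the probability that a uniformly random setting of the variables outside $S$ does not force $f=0$. (The influence of $S$ toward one is $I^+_S(f)=J^+_S(f)-\mu(f)$.) *)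

theory Defs
  imports Complex_Main
begin

text \<open>Points of \<Omega>(T) = {0,1}^T are encoded by their supports, i.e. subsets of T.
  A Boolean function on \<Omega>([n]) is a predicate on subsets of {1..n}.\<close>

definition cube :: "nat set \<Rightarrow> nat set set" where
  "cube T = Pow T"

definition mu :: "nat \<Rightarrow> (nat set \<Rightarrow> bool) \<Rightarrow> real" where
  "mu n f = real (card {x \<in> cube {1..n}. f x}) / 2 ^ n"

definition Jplus :: "nat \<Rightarrow> nat set \<Rightarrow> (nat set \<Rightarrow> bool) \<Rightarrow> real" where
  "Jplus n S f = real (card {u \<in> cube ({1..n} - S). \<exists>v \<in> cube S. f (u \<union> v)})
                 / 2 ^ card ({1..n} - S)"

end

theory Submission
  imports Defs "HOL-Real_Asymp.Real_Asymp"
begin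

text \<open>Cut {1..n} into n div m blocks of length m \<approx> A log n and call a point light if some
  block carries at most t = \<lfloor>\<beta> m\<rfloor> ones, where \<beta> = (1 - \<delta>)/2 < 1/2. Any f supported on
  non-light points works: a set S of size (1/2 - \<delta>) n < (n div m)(t + 1) meets some block in at
  most t coordinates, so every setting of the variables outside S that vanishes on that block
  forces f = 0, and J^+_S(f) \<le> 1 - 2^-m = 1 - n^-O(1). Since \<beta> < 1/2, the binomial tail
  \<Sum>j\<le>t. m choose j is at most (2q)^m for some q < 1, so for suitable A the light points form at
  most a 1/n fraction of the cube, which leaves room for every density \<alpha> < 1.\<close>

lemma card_Pow_restrict_eq:
  assumes "finite U" "B \<subseteq> U"
  shows "card {x \<in> Pow U. P (x \<inter> B)} = card {a \<in> Pow B. P a} * 2 ^ card (U - B)"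
proof -
  have split_inverse: "(a \<union> b) \<inter> B = a" "(a \<union> b) - B = b" if "a \<subseteq> B" "b \<subseteq> U - B" for a b
    using that by auto
  have "bij_betw (\<lambda>x. (x \<inter> B, x - B)) {x \<in> Pow U. P (x \<inter> B)} ({a \<in> Pow B. P a} \<times> Pow (U - B))"
    by (rule bij_betw_byWitness[where f' = "\<lambda>(a, b). a \<union> b"]) (use assms split_inverse in auto)
  then show ?thesis
    using assms by (simp add: bij_betw_same_card card_cartesian_product card_Pow)
qed

lemma card_Pow_card_le:
  assumes "finite B"
  shows "card {a \<in> Pow B. card a \<le> t} = (\<Sum>j\<le>t. card B choose j)"
proof -
  have "{a \<in> Pow B. card a \<le> t} = (\<Union>j\<le>t. {a. a \<subseteq> B \<and> card a = j})" by auto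
  moreover have "card (\<Union>j\<le>t. {a. a \<subseteq> B \<and> card a = j}) = (\<Sum>j\<le>t. card {a. a \<subseteq> B \<and> card a = j})"
    by (rule card_UN_disjoint) (auto intro: finite_subset[of _ "Pow B"] simp: assms)
  ultimately show ?thesis by (simp add: n_subsets assms)
qed

lemma Jplus_le_if_forced_zero:
  assumes "finite B"
    and forced: "\<And>u v. u \<subseteq> {1..n} - S \<Longrightarrow> v \<subseteq> S \<Longrightarrow> u \<inter> B = {} \<Longrightarrow> \<not> f (u \<union> v)"
  shows "Jplus n S f \<le> 1 - 1 / 2 ^ card B"
proof -
  define T where "T = {1..n} - S"
  have "finite T"
    by (simp add: T_def)
  have "{u \<in> cube T. \<exists>v \<in> cube S. f (u \<union> v)} \<subseteq> Pow T - Pow (T - B)"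
    using forced unfolding cube_def T_def by blast
  then have "card {u \<in> cube T. \<exists>v \<in> cube S. f (u \<union> v)} \<le> card (Pow T - Pow (T - B))"
    by (rule card_mono[rotated]) (simp add: T_def)
  also have "\<dots> = 2 ^ card T - 2 ^ card (T - B)"
    by (subst card_Diff_subset) (auto simp: T_def card_Pow)
  finally have "Jplus n S f \<le> (2 ^ card T - 2 ^ card (T - B)) / 2 ^ card T"
    unfolding Jplus_def T_def[symmetric]
    by (intro divide_right_mono) (auto simp: of_nat_diff T_def card_mono power_increasing dest: of_nat_mono[where 'a=real])
  also have "\<dots> = 1 - 1 / 2 ^ (card T - card (T - B))"
    by (simp add: diff_divide_distrib power_diff T_def card_mono)
  also have "\<dots> \<le> 1 - 1 / 2 ^ card B"
  proof -
    have "card (T - B) = card T - card (T \<inter> B)" "card (T \<inter> B) \<le> card T"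
      by (simp_all add: \<open>finite T\<close> card_Diff_subset_Int card_mono)
    then have "card T - card (T - B) = card (T \<inter> B)"
      by linarith
    also have "\<dots> \<le> card B"
      by (simp add: assms card_mono)
    finally show ?thesis
      by (simp add: frac_le power_increasing)
  qed
  finally show ?thesis .
qed

lemma obtain_small_intersection:
  assumes "finite S" "finite I"
    and disjoint: "\<And>i j. i \<in> I \<Longrightarrow> j \<in> I \<Longrightarrow> i \<noteq> j \<Longrightarrow> B i \<inter> B j = {}"
    and "card S < card I * (t + 1)"
  obtains i where "i \<in> I" "card (S \<inter> B i) \<le> t"
proof -
  have "\<exists>i \<in> I. card (S \<inter> B i) \<le> t"
  proof (rule ccontr)
    assume "\<not> ?thesis"
    then have "card I * (t + 1) \<le> (\<Sum>i\<in>I. card (S \<inter> B i))"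
      using sum_mono[of I "\<lambda>_. t + 1" "\<lambda>i. card (S \<inter> B i)"] by fastforce
    also have "\<dots> = card (\<Union>i\<in>I. S \<inter> B i)"
      by (rule card_UN_disjoint[symmetric]) (use assms in auto)
    also have "\<dots> \<le> card S"
      by (rule card_mono) (use assms in auto)
    finally show False
      using assms by linarith
  qed
  then show ?thesis
    using that by blast
qed

definition block :: "nat \<Rightarrow> nat \<Rightarrow> nat set" where
  "block m i = {i * m + 1..i * m + m}"

lemma card_block: "card (block m i) = m"
  by (simp add: block_def)

lemma finite_block: "finite (block m i)"
  by (simp add: block_def)

lemma block_subset: "i < n div m \<Longrightarrow> block m i \<subseteq> {1..n}"
proof -
  assume "i < n div m"
  then have "i * m + m \<le> (n div m) * m"
    by (metis Suc_leI add.commute mult_Suc mult_le_mono1)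
  then have "i * m + m \<le> n"
    using div_times_less_eq_dividend[of n m] by linarith
  then show ?thesis
    unfolding block_def by auto
qed

lemma block_disjoint:
  assumes "i \<noteq> j"
  shows "block m i \<inter> block m j = {}"
proof -
  have "block m i \<inter> block m j = {}" if "i < j" for i j
  proof -
    from that have "i * m + m \<le> j * m"
      by (metis Suc_leI add.commute mult_Suc mult_le_mono1)
    then show ?thesis
      unfolding block_def by auto
  qed
  then show ?thesis
    using assms by (metis Int_commute nat_neq_iff)
qed

definition light :: "nat \<Rightarrow> nat \<Rightarrow> nat \<Rightarrow> nat set set" where
  "light n m t = {x \<in> Pow {1..n}. \<exists>i < n div m. card (x \<inter> block m i) \<le> t}"

lemma card_light_le:
  "card (light n m t) \<le> (n div m) * ((\<Sum>j\<le>t. m choose j) * 2 ^ (n - m))"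
proof -
  have "card (light n m t) \<le> (\<Sum>i < n div m. card {x \<in> Pow {1..n}. card (x \<inter> block m i) \<le> t})"
  proof -
    have "light n m t = (\<Union>i < n div m. {x \<in> Pow {1..n}. card (x \<inter> block m i) \<le> t})"
      unfolding light_def by auto
    then show ?thesis
      by (simp add: card_UN_le)
  qed
  also have "\<dots> = (\<Sum>i < n div m. (\<Sum>j\<le>t. m choose j) * 2 ^ (n - m))"
  proof (rule sum.cong)
    fix i assume "i \<in> {..< n div m}"
    then have sub: "block m i \<subseteq> {1..n}"
      by (intro block_subset) simp
    then have "card ({1..n} - block m i) = n - m"
      by (simp add: card_Diff_subset finite_subset card_block)
    then show "card {x \<in> Pow {1..n}. card (x \<inter> block m i) \<le> t} = (\<Sum>j\<le>t. m choose j) * 2 ^ (n - m)"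
      using card_Pow_restrict_eq[OF _ sub, of "\<lambda>a. card a \<le> t"] card_Pow_card_le[OF finite_block, of m i t]
      by (simp add: card_block)
  qed simp
  finally show ?thesis
    by simp
qed

lemma exists_function_avoiding_light:
  assumes "k < (n div m) * (t + 1)" and "card (light n m t) + M \<le> 2 ^ n"
  shows "\<exists>f. card {x \<in> cube {1..n}. f x} = M \<and>
           (\<forall>S. S \<subseteq> {1..n} \<and> card S = k \<longrightarrow> Jplus n S f \<le> 1 - 1 / 2 ^ m)"
proof -
  have "light n m t \<subseteq> Pow {1..n}"
    unfolding light_def by auto
  then have "M \<le> card (Pow {1..n} - light n m t)"
    using assms(2) by (simp add: card_Diff_subset finite_subset card_Pow)
  then obtain F where F: "F \<subseteq> Pow {1..n} - light n m t" "card F = M"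
    by (meson obtain_subset_with_card_n)
  have "Jplus n S (\<lambda>x. x \<in> F) \<le> 1 - 1 / 2 ^ m" if S: "S \<subseteq> {1..n}" "card S = k" for S
  proof -
    obtain i where i: "i < n div m" "card (S \<inter> block m i) \<le> t"
      using obtain_small_intersection[of S "{..<n div m}" "block m" t] S assms(1)
      by (auto simp: block_disjoint finite_subset)
    have "u \<union> v \<notin> F" if "u \<subseteq> {1..n} - S" "v \<subseteq> S" "u \<inter> block m i = {}" for u v
    proof -
      have "card ((u \<union> v) \<inter> block m i) \<le> card (S \<inter> block m i)"
        by (rule card_mono) (use that in \<open>auto simp: block_def\<close>)
      then have "u \<union> v \<in> light n m t"
        unfolding light_def using that S i by auto
      then show ?thesis
        using F by auto
    qed
    then show ?thesis
      using Jplus_le_if_forced_zero[of "block m i" n S "\<lambda>x. x \<in> F"] by (simp add: card_block block_def)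
  qed
  moreover have "{x \<in> cube {1..n}. x \<in> F} = F"
    using F(1) unfolding cube_def by auto
  ultimately show ?thesis
    using F(2) by (intro exI[of _ "\<lambda>x. x \<in> F"]) auto
qed

lemma sum_choose_le:
  fixes r :: real
  assumes "0 < r" "r \<le> 1"
  shows "real (\<Sum>j\<le>t. m choose j) \<le> (1 / r) ^ t * (1 + r) ^ m"
proof -
  have "real (\<Sum>j\<le>t. m choose j) \<le> (\<Sum>j\<le>t. real (m choose j) * (r ^ j * (1 / r) ^ t))"
    unfolding of_nat_sum
  proof (rule sum_mono)
    fix j assume "j \<in> {..t}"
    then have "(1 / r) ^ t = (1 / r) ^ j * (1 / r) ^ (t - j)"
      by (simp flip: power_add)
    moreover have "1 \<le> (1 / r) ^ (t - j)"
      using assms by (simp add: one_le_power)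
    ultimately have "1 \<le> r ^ j * (1 / r) ^ t"
      using assms by (simp add: power_divide)
    then show "real (m choose j) \<le> real (m choose j) * (r ^ j * (1 / r) ^ t)"
      by (simp add: mult_le_cancel_left1)
  qed
  also have "\<dots> = (1 / r) ^ t * (\<Sum>j\<le>t. real (m choose j) * r ^ j)"
    by (simp add: sum_distrib_left algebra_simps)
  also have "(\<Sum>j\<le>t. real (m choose j) * r ^ j) \<le> (\<Sum>j\<le>m. real (m choose j) * r ^ j)"
  proof -
    have "(\<Sum>j\<le>t. real (m choose j) * r ^ j) \<le> (\<Sum>j\<le>max t m. real (m choose j) * r ^ j)"
      by (rule sum_mono2) (use assms in auto)
    also have "\<dots> = (\<Sum>j\<le>m. real (m choose j) * r ^ j)"
      by (rule sum.mono_neutral_right) auto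
    finally show ?thesis .
  qed
  also have "(\<Sum>j\<le>m. real (m choose j) * r ^ j) = (1 + r) ^ m"
    using binomial_ring[of r 1 m] by (simp add: add.commute)
  finally show ?thesis
    using assms by (simp add: mult_left_mono)
qed

lemma sum_choose_le_powr:
  fixes r \<beta> :: real
  assumes "0 < r" "r < 1" "0 < \<beta>" "real t \<le> \<beta> * real m"
  shows "real (\<Sum>j\<le>t. m choose j) \<le> ((1 + r) / r powr \<beta>) ^ m"
proof -
  have "(r powr \<beta>) ^ m = r powr (\<beta> * real m)"
    using assms by (simp add: powr_power powr_realpow mult.commute)
  also have "\<dots> \<le> r ^ t"
    using assms by (simp add: powr_mono' flip: powr_realpow)
  finally have "(1 / r) ^ t \<le> 1 / (r powr \<beta>) ^ m"
    using assms by (simp add: power_one_over divide_simps)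
  then have "(1 / r) ^ t * (1 + r) ^ m \<le> 1 / (r powr \<beta>) ^ m * (1 + r) ^ m"
    by (rule mult_right_mono) (use assms in simp)
  then show ?thesis
    using sum_choose_le[where r = r and t = t and m = m] assms by (simp add: power_divide)
qed

lemma obtain_geometric_sum_choose_bound:
  fixes \<delta> :: real
  assumes "0 < \<delta>" "\<delta> < 1"
  obtains q :: real where "0 < q" "q < 1"
    "\<And>m t. real t \<le> (1/2 - \<delta>/2) * real m \<Longrightarrow> real (\<Sum>j\<le>t. m choose j) \<le> (2 * q) ^ m"
proof -
  define r where "r = 1 - \<delta>/2"
  define \<beta> where "\<beta> = 1/2 - \<delta>/2"
  have r: "0 < r" "r < 1" and \<beta>: "0 < \<beta>"
    using assms by (auto simp: r_def \<beta>_def)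
  have "(1 + r) / 2 < 1 + \<beta> * (1 - 1 / r)"
    using assms unfolding r_def \<beta>_def by (simp add: field_simps)
  also have "1 - 1 / r \<le> ln r"
    using ln_le_minus_one[of "1 / r"] r by (simp add: ln_div)
  then have "1 + \<beta> * (1 - 1 / r) \<le> 1 + \<beta> * ln r"
    using \<beta> by simp
  also have "\<dots> \<le> r powr \<beta>"
    using exp_ge_add_one_self[of "\<beta> * ln r"] r by (simp add: powr_def mult.commute)
  finally have "(1 + r) / 2 < r powr \<beta>" .
  define q where "q = (1 + r) / 2 / r powr \<beta>"
  have two_q: "2 * q = (1 + r) / r powr \<beta>"
    using r by (simp add: q_def field_simps)
  show thesis
  proof (rule that)
    show "0 < q" "q < 1"
      using r \<open>(1 + r) / 2 < r powr \<beta>\<close> by (simp_all add: q_def)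
    show "real (\<Sum>j\<le>t. m choose j) \<le> (2 * q) ^ m" if "real t \<le> (1/2 - \<delta>/2) * real m" for m t
      unfolding two_q using sum_choose_le_powr[OF r \<beta> that[folded \<beta>_def]] .
  qed
qed

lemma power_le_inverse_square:
  fixes q A x :: real
  assumes "0 < q" "q < 1" "A * ln q = -2" "0 < x" "A * ln x \<le> real m"
  shows "q ^ m \<le> 1 / x ^ 2"
proof -
  have "q ^ m = q powr real m"
    using assms by (simp add: powr_realpow)
  also have "\<dots> \<le> q powr (A * ln x)"
    by (rule powr_mono') (use assms in auto)
  also have "\<dots> = x powr (A * ln q)"
    using assms(1,4) by (simp add: powr_def mult_ac)
  also have "\<dots> = 1 / x ^ 2"
    using assms by (simp add: powr_minus powr_realpow divide_inverse)
  finally show ?thesis .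
qed

lemma powr_lt_inverse_two_power:
  fixes A x :: real
  assumes "2 < x" "real m < A * ln x + 1"
  shows "x powr - (A * ln 2 + 1) < 1 / 2 ^ m"
proof -
  define a where "a = x powr (A * ln 2)"
  have "0 < a"
    using assms by (simp add: a_def)
  have "2 ^ m = (2::real) powr real m"
    by (simp add: powr_realpow)
  also have "\<dots> < 2 powr (A * ln x + 1)"
    using assms by simp
  also have "\<dots> = 2 * 2 powr (A * ln x)"
    by (simp add: powr_add)
  also have "2 powr (A * ln x) = a"
    using assms by (simp add: a_def powr_def mult_ac)
  finally have "1 / (2 * a) < 1 / 2 ^ m"
    by (simp add: frac_less2)
  have "x powr (A * ln 2 + 1) = a * x"
    using assms by (simp add: a_def powr_add)
  then have "x powr - (A * ln 2 + 1) = 1 / (a * x)"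
    unfolding powr_minus_divide by simp
  moreover have "1 / (a * x) < 1 / (2 * a)"
    using assms \<open>0 < a\<close> by (simp add: frac_less2)
  ultimately show ?thesis
    using \<open>1 / (2 * a) < 1 / 2 ^ m\<close> by linarith
qed

lemma less_div_mult_Suc_floor:
  fixes \<beta> :: real
  assumes "0 < m" "0 < \<beta>" "real k \<le> \<beta> * (real n - real m)"
  shows "k < (n div m) * (nat \<lfloor>\<beta> * real m\<rfloor> + 1)"
proof -
  have "n < (n div m) * m + m"
    using mod_less_divisor[OF assms(1), of n] div_mult_mod_eq[of n m] by linarith
  then have "real n - real m < real (n div m) * real m"
    by (simp flip: of_nat_mult of_nat_add)
  then have "\<beta> * (real n - real m) < \<beta> * (real (n div m) * real m)"
    using assms(2) by simp
  then have "real k < real (n div m) * (\<beta> * real m)"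
    using assms(3) by (simp add: mult_ac)
  also have "\<dots> \<le> real (n div m) * real (nat \<lfloor>\<beta> * real m\<rfloor> + 1)"
    using assms by (intro mult_left_mono) linarith+
  also have "\<dots> = real ((n div m) * (nat \<lfloor>\<beta> * real m\<rfloor> + 1))"
    by (simp only: of_nat_mult)
  finally show ?thesis
    by (simp only: of_nat_less_iff)
qed

lemma card_light_le_fraction:
  fixes q A :: real
  assumes q: "0 < q" "q < 1" "A * ln q = -2"
    and "0 < n" "A * ln n \<le> real m" "m \<le> n"
    and sum_choose: "real (\<Sum>j\<le>t. m choose j) \<le> (2 * q) ^ m"
  shows "real (card (light n m t)) \<le> 2 ^ n / real n"
proof -
  have "real (card (light n m t)) \<le> real (n div m) * (real (\<Sum>j\<le>t. m choose j) * 2 ^ (n - m))"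
    using of_nat_mono[OF card_light_le[of n m t], where 'a = real] by simp
  also have "\<dots> \<le> real n * ((2 * q) ^ m * 2 ^ (n - m))"
    using sum_choose q by (intro mult_mono) (auto intro!: mult_nonneg_nonneg sum_nonneg)
  also have "\<dots> = real n * q ^ m * (2 ^ m * 2 ^ (n - m))"
    by (simp add: power_mult_distrib mult_ac)
  also have "\<dots> = real n * q ^ m * 2 ^ n"
    using \<open>m \<le> n\<close> by (simp flip: power_add)
  also have "\<dots> \<le> real n * (1 / real n ^ 2) * 2 ^ n"
    using power_le_inverse_square[OF q, of n m] assms by (intro mult_right_mono mult_left_mono) simp_all
  also have "\<dots> = 2 ^ n / real n"
    by (simp add: power2_eq_square)
  finally show ?thesis .
qed

lemma exists_function_low_influence:
  fixes q A \<beta> :: real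
  assumes q: "0 < q" "q < 1" "A * ln q = -2"
    and sum_choose: "\<And>m t. real t \<le> \<beta> * real m \<Longrightarrow> real (\<Sum>j\<le>t. m choose j) \<le> (2 * q) ^ m"
    and \<beta>: "0 < \<beta>"
    and n: "3 \<le> n" "A * ln n + 1 \<le> n"
    and k: "real k \<le> \<beta> * (real n - (A * ln n + 1))"
    and M: "real M + 2 ^ n / real n \<le> 2 ^ n"
  shows "\<exists>f. card {x \<in> cube {1..n}. f x} = M \<and>
           (\<forall>S. S \<subseteq> {1..n} \<and> card S = k \<longrightarrow> Jplus n S f < 1 - real n powr - (A * ln 2 + 1))"
proof -
  have "0 < A"
    using q mult_nonpos_nonpos[of A "ln q"] ln_less_zero[of q] by linarith
  then have "0 < A * ln n"
    using n by simp
  define m where "m = nat \<lceil>A * ln n\<rceil>"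
  define t where "t = nat \<lfloor>\<beta> * real m\<rfloor>"
  have m_ge: "A * ln n \<le> real m" and m_lt: "real m < A * ln n + 1"
    using \<open>0 < A * ln n\<close> unfolding m_def by linarith+
  then have "0 < m" "m \<le> n"
    using \<open>0 < A * ln n\<close> n by simp_all
  have "\<beta> * (real n - (A * ln n + 1)) \<le> \<beta> * (real n - real m)"
    using m_lt \<beta> by (intro mult_left_mono) auto
  then have "real k \<le> \<beta> * (real n - real m)"
    using k by linarith
  then have k_lt: "k < (n div m) * (t + 1)"
    unfolding t_def by (rule less_div_mult_Suc_floor[OF \<open>0 < m\<close> \<beta>])
  have "real (card (light n m t)) \<le> 2 ^ n / real n"
    using card_light_le_fraction[OF q _ m_ge \<open>m \<le> n\<close> sum_choose[of t m]] n \<beta> by (simp add: t_def)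
  then have "real (card (light n m t) + M) \<le> real (2 ^ n)"
    using M by simp
  then have "card (light n m t) + M \<le> 2 ^ n"
    by (simp only: of_nat_le_iff)
  then obtain f where f: "card {x \<in> cube {1..n}. f x} = M"
    and J: "\<And>S. S \<subseteq> {1..n} \<Longrightarrow> card S = k \<Longrightarrow> Jplus n S f \<le> 1 - 1 / 2 ^ m"
    using exists_function_avoiding_light[OF k_lt] by blast
  have "real n powr - (A * ln 2 + 1) < 1 / 2 ^ m"
    using powr_lt_inverse_two_power[of n m A] n m_lt by simp
  then have "Jplus n S f < 1 - real n powr - (A * ln 2 + 1)" if "S \<subseteq> {1..n}" "card S = k" for S
    using J[OF that] by linarith
  then show ?thesis
    using f by blast
qed

lemma exists_function_rounded_density:
  fixes q A \<alpha> \<delta> :: real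
  assumes q: "0 < q" "q < 1" "A * ln q = -2"
    and sum_choose: "\<And>m t. real t \<le> (1/2 - \<delta>/2) * real m \<Longrightarrow> real (\<Sum>j\<le>t. m choose j) \<le> (2 * q) ^ m"
    and "0 < \<alpha>" "0 < \<delta>" "\<delta> < 1"
    and n: "3 \<le> n" "A * ln n + 1 \<le> n" "(1/2 - \<delta>/2) * (A * ln n + 1) \<le> \<delta>/2 * n"
      "\<alpha> * 2 ^ n + 1 + 2 ^ n / n \<le> 2 ^ n"
  shows "\<exists>f. mu n f = real_of_int \<lceil>\<alpha> * 2 ^ n\<rceil> / 2 ^ n \<and>
           (\<forall>S. S \<subseteq> {1..n} \<and> card S = nat \<lfloor>(1/2 - \<delta>) * real n\<rfloor> \<longrightarrow>
                Jplus n S f < 1 - real n powr - (A * ln 2 + 1))"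
proof -
  have "real (nat \<lfloor>(1/2 - \<delta>) * real n\<rfloor>) \<le> max 0 ((1/2 - \<delta>) * real n)"
    by linarith
  also have "\<dots> \<le> (1/2 - \<delta>/2) * (real n - (A * ln n + 1))"
  proof (rule max.boundedI)
    show "0 \<le> (1/2 - \<delta>/2) * (real n - (A * ln n + 1))"
      using n assms by simp
    show "(1/2 - \<delta>) * real n \<le> (1/2 - \<delta>/2) * (real n - (A * ln n + 1))"
      using n by (simp add: algebra_simps)
  qed
  finally have k: "real (nat \<lfloor>(1/2 - \<delta>) * real n\<rfloor>) \<le> (1/2 - \<delta>/2) * (real n - (A * ln n + 1))" .
  have M_eq: "real (nat \<lceil>\<alpha> * 2 ^ n\<rceil>) = real_of_int \<lceil>\<alpha> * 2 ^ n\<rceil>"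
    using assms by simp
  then have M: "real (nat \<lceil>\<alpha> * 2 ^ n\<rceil>) + 2 ^ n / real n \<le> 2 ^ n"
    using n ceiling_correct[of "\<alpha> * 2 ^ n"] by linarith
  have "0 < 1/2 - \<delta>/2"
    using assms by simp
  then obtain f where "card {x \<in> cube {1..n}. f x} = nat \<lceil>\<alpha> * 2 ^ n\<rceil>"
    and "\<forall>S. S \<subseteq> {1..n} \<and> card S = nat \<lfloor>(1/2 - \<delta>) * real n\<rfloor> \<longrightarrow>
              Jplus n S f < 1 - real n powr - (A * ln 2 + 1)"
    using exists_function_low_influence[OF q sum_choose _ _ _ k M] n by blast
  then show ?thesis
    unfolding mu_def M_eq[symmetric] by auto
qed

theorem theorem1p1:
  fixes \<alpha> \<delta> :: real
  assumes "0 < \<alpha>" "\<alpha> < 1" "0 < \<delta>" "\<delta> < 1"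
  shows "\<exists>C > 0. \<exists>N. \<forall>n \<ge> N. \<exists>f :: nat set \<Rightarrow> bool.
           mu n f = real_of_int \<lceil>\<alpha> * 2 ^ n\<rceil> / 2 ^ n \<and>
           (\<forall>S. S \<subseteq> {1..n} \<and> card S = nat \<lfloor>(1/2 - \<delta>) * real n\<rfloor> \<longrightarrow>
                Jplus n S f < 1 - real n powr (- C))"
proof -
  obtain q where q: "0 < q" "q < 1"
    and sum_choose: "\<And>m t. real t \<le> (1/2 - \<delta>/2) * real m \<Longrightarrow> real (\<Sum>j\<le>t. m choose j) \<le> (2 * q) ^ m"
    using obtain_geometric_sum_choose_bound[OF assms(3,4)] by blast
  define A where "A = -2 / ln q"
  have A: "A * ln q = -2" "0 < A"
    using q by (simp_all add: A_def divide_neg_neg)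
  have "eventually (\<lambda>n::nat. 3 \<le> n \<and> A * ln n + 1 \<le> n \<and>
      (1/2 - \<delta>/2) * (A * ln n + 1) \<le> \<delta>/2 * n \<and> \<alpha> * 2 ^ n + 1 + 2 ^ n / n \<le> 2 ^ n) sequentially"
    using A assms by (intro eventually_conj) real_asymp+
  then obtain N where "\<And>n. N \<le> n \<Longrightarrow> 3 \<le> n \<and> A * ln n + 1 \<le> n \<and>
      (1/2 - \<delta>/2) * (A * ln n + 1) \<le> \<delta>/2 * n \<and> \<alpha> * 2 ^ n + 1 + 2 ^ n / n \<le> 2 ^ n"
    unfolding eventually_sequentially by blast
  then have "\<forall>n \<ge> N. \<exists>f. mu n f = real_of_int \<lceil>\<alpha> * 2 ^ n\<rceil> / 2 ^ n \<and>
           (\<forall>S. S \<subseteq> {1..n} \<and> card S = nat \<lfloor>(1/2 - \<delta>) * real n\<rfloor> \<longrightarrow>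
                Jplus n S f < 1 - real n powr - (A * ln 2 + 1))"
    using exists_function_rounded_density[OF q A(1) sum_choose] assms by blast
  moreover have "0 < A * ln 2 + 1"
    using A(2) by (simp add: add_pos_pos)
  ultimately show ?thesis
    by blast
qed

end
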